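(* Let $n\in\mathbf{N}$ and $A\subset[n]$ have property P. Let $Z$ and $Z^{1(2)}_{(\frac29,\frac13]}$ be as defined in the context. Then for each $i\in\{1,3\}$, $$\left|Z^{1(2)}_{(\frac29,\frac13]}\right|+\left|A\cap\left(\tfrac{2n}{3},n\right]\cap(i+4\mathbf{Z})\right|\leqslant\frac{n}{12}+3.$$
   Context: A set $A\subset\mathbf{N}$ has property P if there are no $x,y,z\in A$ (not necessarily distinct $x,y$) with $z<x$, $z<y$ and $z\mid x+y$. Intervals denote sets of integers. For $a\in A\cap[1,\frac n2]$ let $m_a\geqslant0$ be the unique integer with $3^{m_a}a\in(\frac n6,\frac n2]$. Define $Z=\{3^{m_a}a: a\in A\cap[1,\frac n2],\ 3^{m_a}a\in(\frac{2n}{9},\frac n2]\}\cup\{2\cdot3^{m_a}a: a\in A\cap[1,\frac n2],\ 3^{m_a}a\in(\frac n6,\frac{2n}{9}]\}\subset(\frac{2n}{9},\frac n2]$, and $Z^{1(2)}_{(\frac29,\frac13]}=Z\cap(\frac{2n}{9},\frac n3]\cap(1+2\mathbf{Z})$. *)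

theory Defs
  imports Complex_Main
begin

definition propP :: "nat set \<Rightarrow> bool" where
  "propP A \<longleftrightarrow> \<not> (\<exists>x\<in>A. \<exists>y\<in>A. \<exists>z\<in>A. z < x \<and> z < y \<and> z dvd (x + y))"

definition mexp :: "nat \<Rightarrow> nat \<Rightarrow> nat" where
  "mexp n a = (THE m. n < 6 * (3 ^ m * a) \<and> 2 * (3 ^ m * a) \<le> n)"

definition Zset :: "nat \<Rightarrow> nat set \<Rightarrow> nat set" where
  "Zset n A =
     {3 ^ mexp n a * a | a. a \<in> A \<and> 1 \<le> a \<and> 2 * a \<le> n \<and> 2 * n < 9 * (3 ^ mexp n a * a)}
   \<union> {2 * (3 ^ mexp n a * a) | a. a \<in> A \<and> 1 \<le> a \<and> 2 * a \<le> n \<and>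
        n < 6 * (3 ^ mexp n a * a) \<and> 9 * (3 ^ mexp n a * a) \<le> 2 * n}"

definition Z12 :: "nat \<Rightarrow> nat set \<Rightarrow> nat set" where
  "Z12 n A = {z \<in> Zset n A. 2 * n < 9 * z \<and> 3 * z \<le> n \<and> odd z}"

end

theory Submission
  imports Defs
begin

text \<open>
  An odd element t of Z has the form 3^k a with a \<in> A, so by property P it divides no sum
  of two elements of A exceeding t. In particular no t \<in> Z^{1(2)}_{(2/9,1/3]} is a sixth of a sum
  x + y of elements x, y \<in> A \<inter> (2n/3, n] \<inter> (i + 4\<int>), and both kinds of numbers lie among the
  at most n/18 + 1 odd integers of (2n/9, n/3]. Modulo 12 the class i + 4\<int> splits into
  classes r0, r1, r2 with 2 r0 \<equiv> r1 + r2 \<equiv> 6, so every sum from r0 + r0 or r1 + r2 is six times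
  an odd number. Since |X + Y| \<ge> |X| + |Y| - 1, the larger part of the top set is paid for by
  distinct sixths of sums, and the remaining class contributes at most n/36 + 1.
\<close>

lemma card_residue_class_le:
  fixes X :: "nat set" and d r :: nat and lo hi :: real
  assumes "finite X" and "d > 0" and "\<forall>x\<in>X. x mod d = r"
    and "\<forall>x\<in>X. lo < real x \<and> real x \<le> hi" and "lo \<le> hi"
  shows "real (card X) \<le> (hi - lo) / real d + 1"
proof (cases "X = {}")
  case True
  then show ?thesis using assms by simp
next
  case False
  define m where "m = Min X"
  define M where "M = Max X"
  have mM: "m \<in> X" "M \<in> X" "\<forall>x\<in>X. m \<le> x \<and> x \<le> M"
    using False assms(1) m_def M_def by auto
  have "X \<subseteq> (\<lambda>k. m + d * k) ` {0..(M - m) div d}"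
  proof
    fix x assume x: "x \<in> X"
    have "x mod d = m mod d" using assms(3) x mM by simp
    then have "d dvd x - m" using x mM by (simp add: mod_eq_dvd_iff_nat)
    then obtain k where k: "x - m = d * k" by blast
    have "k \<le> (M - m) div d"
      using div_le_mono[of "d * k" "M - m" d] k mM x assms(2) by auto
    moreover have "x = m + d * k" using k mM x by auto
    ultimately show "x \<in> (\<lambda>k. m + d * k) ` {0..(M - m) div d}" by auto
  qed
  then have "card X \<le> card ((\<lambda>k. m + d * k) ` {0..(M - m) div d})"
    by (intro card_mono) auto
  also have "\<dots> \<le> card {0..(M - m) div d}"
    by (rule card_image_le) simp
  finally have card_X: "card X \<le> (M - m) div d + 1" by simp
  have "lo < real m" "real M \<le> hi" using assms(4) mM by auto
  then have "real (M - m) \<le> hi - lo" using mM by simp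
  have "real (card X) \<le> real ((M - m) div d) + 1"
    using card_X by simp
  also have "real ((M - m) div d) \<le> real (M - m) / real d"
    by (rule of_nat_div_le_of_nat)
  also have "\<dots> \<le> (hi - lo) / real d"
    using \<open>real (M - m) \<le> hi - lo\<close> by (simp add: divide_right_mono)
  finally show ?thesis by simp
qed

definition sumset :: "'a::plus set \<Rightarrow> 'a set \<Rightarrow> 'a set" where
  "sumset A B = {a + b | a b. a \<in> A \<and> b \<in> B}"

lemma finite_sumset [simp]:
  assumes "finite A" and "finite B"
  shows "finite (sumset A B)"
proof -
  have "sumset A B = (\<lambda>(a, b). a + b) ` (A \<times> B)" unfolding sumset_def by auto
  then show ?thesis using assms by simp
qed

lemma card_sumset_ge:
  fixes A B :: "'a :: linordered_cancel_ab_semigroup_add set"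
  assumes "finite A" and "finite B" and "A \<noteq> {}" and "B \<noteq> {}"
  shows "card A + card B \<le> card (sumset A B) + 1"
proof -
  define a\<^sub>0 where "a\<^sub>0 = Max A"
  define b\<^sub>0 where "b\<^sub>0 = Min B"
  have a\<^sub>0: "a\<^sub>0 \<in> A" "\<forall>a\<in>A. a \<le> a\<^sub>0" using assms a\<^sub>0_def by auto
  have b\<^sub>0: "b\<^sub>0 \<in> B" "\<forall>b\<in>B. b\<^sub>0 \<le> b" using assms b\<^sub>0_def by auto
  define U where "U = (\<lambda>a. a + b\<^sub>0) ` A"
  define V where "V = (\<lambda>b. a\<^sub>0 + b) ` B"
  have "card U = card A"
    unfolding U_def by (rule card_image) (simp add: inj_on_def)
  moreover have "card V = card B"
    unfolding V_def by (rule card_image) (simp add: inj_on_def)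
  moreover have "U \<inter> V \<subseteq> {a\<^sub>0 + b\<^sub>0}"
  proof
    fix u assume "u \<in> U \<inter> V"
    then obtain a b where "a \<in> A" "u = a + b\<^sub>0" "b \<in> B" "u = a\<^sub>0 + b"
      unfolding U_def V_def by auto
    moreover have "a + b\<^sub>0 \<le> a\<^sub>0 + b\<^sub>0" "a\<^sub>0 + b\<^sub>0 \<le> a\<^sub>0 + b"
      using a\<^sub>0 b\<^sub>0 \<open>a \<in> A\<close> \<open>b \<in> B\<close> by (simp_all add: add_right_mono add_left_mono)
    ultimately show "u \<in> {a\<^sub>0 + b\<^sub>0}" by (simp add: order_antisym)
  qed
  then have "card (U \<inter> V) \<le> 1" using card_mono[of "{a\<^sub>0 + b\<^sub>0}"] by simp
  moreover have "card (U \<union> V) + card (U \<inter> V) = card U + card V"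
    using card_Un_Int U_def V_def assms(1,2) by (metis finite_imageI)
  moreover have "U \<union> V \<subseteq> sumset A B"
    unfolding U_def V_def sumset_def using a\<^sub>0 b\<^sub>0 by auto
  then have "card (U \<union> V) \<le> card (sumset A B)"
    using assms(1,2) by (intro card_mono) simp_all
  ultimately show ?thesis by linarith
qed

lemma odd_Zset_elem_power3_multiple:
  assumes "t \<in> Zset n A" and "odd t"
  obtains a k where "a \<in> A" and "t = 3 ^ k * a"
  using assms unfolding Zset_def by auto

lemma Z12_not_dvd_sum:
  assumes "propP A" and "t \<in> Z12 n A" and "x \<in> A" "y \<in> A" and "t < x" "t < y"
  shows "\<not> t dvd x + y"
proof
  assume t_dvd: "t dvd x + y"
  have "t \<in> Zset n A" "odd t" using assms(2) unfolding Z12_def by auto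
  then obtain a k where a: "a \<in> A" "t = 3 ^ k * a"
    by (rule odd_Zset_elem_power3_multiple)
  then have "a \<le> t" using \<open>odd t\<close> by (cases "a = 0") auto
  moreover have "a dvd x + y" using a t_dvd by (metis dvd_triv_right dvd_trans)
  ultimately show False
    using assms a unfolding propP_def by (meson order.strict_trans1)
qed

definition odd_window :: "nat \<Rightarrow> nat set" where
  "odd_window n = {t. 2 * n < 9 * t \<and> 3 * t \<le> n \<and> odd t}"

definition sum_sixths :: "nat \<Rightarrow> nat set \<Rightarrow> nat set" where
  "sum_sixths n S = {t \<in> odd_window n. 6 * t \<in> sumset S S}"

lemma finite_odd_window: "finite (odd_window n)"
  unfolding odd_window_def by (rule finite_subset[of _ "{..n}"]) auto

lemma card_odd_window_le: "real (card (odd_window n)) \<le> real n / 18 + 1"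
proof -
  have "real (card (odd_window n)) \<le> (real n / 3 - 2 * real n / 9) / real (2::nat) + 1"
  proof (rule card_residue_class_le[OF finite_odd_window, where r = 1])
    show "\<forall>x\<in>odd_window n. 2 * real n / 9 < real x \<and> real x \<le> real n / 3"
      unfolding odd_window_def by auto
  qed (auto simp: odd_window_def odd_iff_mod_2_eq_one)
  then show ?thesis by simp
qed

lemma Z12_subset_odd_window: "Z12 n A \<subseteq> odd_window n"
  unfolding Z12_def odd_window_def by auto

lemma Z12_disjoint_sum_sixths:
  assumes "propP A" and "S \<subseteq> A" and "\<forall>x\<in>S. 2 * n < 3 * x"
  shows "Z12 n A \<inter> sum_sixths n S = {}"
proof -
  have "t \<notin> sum_sixths n S" if t: "t \<in> Z12 n A" for t
  proof
    assume "t \<in> sum_sixths n S"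
    then obtain x y where xy: "x \<in> S" "y \<in> S" "6 * t = x + y" and "3 * t \<le> n"
      unfolding sum_sixths_def odd_window_def sumset_def by auto
    then have "t < x" "t < y" using assms(3) by fastforce+
    moreover have "t dvd x + y" using xy(3) by (metis dvd_triv_right)
    ultimately show False using Z12_not_dvd_sum[OF assms(1) t] xy assms(2) by blast
  qed
  then show ?thesis by blast
qed

text \<open>Sums landing in the residue class 6 mod 12 are six times an odd number.\<close>

lemma card_pair_le_sum_sixths:
  assumes S: "\<forall>x\<in>S. 2 * n < 3 * x \<and> x \<le> n" and "finite S"
    and XY: "X \<subseteq> S" "Y \<subseteq> S" "X \<noteq> {}" "Y \<noteq> {}"
    and sum_mod: "\<forall>x\<in>X. \<forall>y\<in>Y. (x + y) mod 12 = 6"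
  shows "card X + card Y \<le> card (sum_sixths n S) + 1"
proof -
  have "sumset X Y \<subseteq> (\<lambda>t. 6 * t) ` sum_sixths n S"
  proof
    fix s assume "s \<in> sumset X Y"
    then obtain x y where xy: "x \<in> X" "y \<in> Y" "s = x + y" by (auto simp: sumset_def)
    define t where "t = 2 * (s div 12) + 1"
    have "s = 6 * t" using sum_mod xy div_mult_mod_eq[of s 12] unfolding t_def by auto
    have "2 * n < 3 * x" "2 * n < 3 * y" "x \<le> n" "y \<le> n"
      using S XY xy by auto
    then have "t \<in> odd_window n"
      using \<open>s = 6 * t\<close> xy(3) unfolding odd_window_def by (simp add: t_def)
    moreover have "6 * t \<in> sumset S S" using XY xy \<open>s = 6 * t\<close> by (auto simp: sumset_def)
    ultimately show "s \<in> (\<lambda>t. 6 * t) ` sum_sixths n S"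
      using \<open>s = 6 * t\<close> unfolding sum_sixths_def by blast
  qed
  moreover have "finite (sum_sixths n S)"
    using finite_odd_window by (simp add: sum_sixths_def)
  ultimately have "card (sumset X Y) \<le> card ((\<lambda>t. 6 * t) ` sum_sixths n S)"
    by (intro card_mono) auto
  also have "\<dots> \<le> card (sum_sixths n S)" by (rule card_image_le) fact
  moreover have "finite X" "finite Y" using XY \<open>finite S\<close> finite_subset by auto
  ultimately show ?thesis using card_sumset_ge[of X Y] XY by linarith
qed

lemma card_top_residue_class_le:
  assumes "\<forall>x\<in>S. 2 * n < 3 * x \<and> x \<le> n" and "finite S"
  shows "real (card {x \<in> S. x mod 12 = r}) \<le> real n / 36 + 1"
proof -
  have "real (card {x \<in> S. x mod 12 = r}) \<le> (real n - 2 * real n / 3) / real (12::nat) + 1"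
  proof (rule card_residue_class_le[where r = r])
    show "\<forall>x\<in>{x \<in> S. x mod 12 = r}. 2 * real n / 3 < real x \<and> real x \<le> real n"
      using assms(1) by fastforce
  qed (use assms(2) in auto)
  then show ?thesis by simp
qed

lemma mod4_classes_mod12:
  fixes i :: nat
  assumes "i \<in> {1, 3}"
  obtains r\<^sub>0 r\<^sub>1 r\<^sub>2 :: nat
  where "(r\<^sub>0 + r\<^sub>0) mod 12 = 6" "(r\<^sub>1 + r\<^sub>2) mod 12 = 6"
    "r\<^sub>0 \<noteq> r\<^sub>1" "r\<^sub>0 \<noteq> r\<^sub>2" "r\<^sub>1 \<noteq> r\<^sub>2"
    "\<forall>x::nat. x mod 4 = i \<longrightarrow> x mod 12 \<in> {r\<^sub>0, r\<^sub>1, r\<^sub>2}"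
proof -
  from assms consider "i = 1" | "i = 3" by auto
  then show ?thesis
  proof cases
    case 1
    show ?thesis by (rule that[of 9 1 5]) (auto simp: 1, presburger)
  next
    case 2
    show ?thesis by (rule that[of 3 7 11]) (auto simp: 2, presburger)
  qed
qed

lemma card_top_le_sum_sixths:
  assumes S: "\<forall>x\<in>S. 2 * n < 3 * x \<and> x \<le> n \<and> x mod 4 = i" and "i \<in> {1, 3}"
  shows "real (card S) \<le> real (card (sum_sixths n S)) + real n / 36 + 2"
proof -
  obtain r\<^sub>0 r\<^sub>1 r\<^sub>2 where r: "(r\<^sub>0 + r\<^sub>0) mod 12 = 6" "(r\<^sub>1 + r\<^sub>2) mod 12 = 6"
      "r\<^sub>0 \<noteq> r\<^sub>1" "r\<^sub>0 \<noteq> r\<^sub>2" "r\<^sub>1 \<noteq> r\<^sub>2" "\<forall>x::nat. x mod 4 = i \<longrightarrow> x mod 12 \<in> {r\<^sub>0, r\<^sub>1, r\<^sub>2}"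
    using mod4_classes_mod12[OF assms(2)] by blast
  define C where "C r = {x \<in> S. x mod 12 = r}" for r
  have S_window: "\<forall>x\<in>S. 2 * n < 3 * x \<and> x \<le> n" using S by blast
  have "S \<subseteq> {..n}" using S_window by auto
  then have "finite S" by (rule finite_subset) simp
  have "S = C r\<^sub>0 \<union> C r\<^sub>1 \<union> C r\<^sub>2" using S r(6) unfolding C_def by blast
  have fin: "finite (C r)" for r using \<open>finite S\<close> unfolding C_def by simp
  have "card (C r\<^sub>0 \<union> C r\<^sub>1 \<union> C r\<^sub>2) = card (C r\<^sub>0 \<union> C r\<^sub>1) + card (C r\<^sub>2)"
    by (rule card_Un_disjoint) (use fin r(4,5) in \<open>auto simp: C_def\<close>)
  also have "card (C r\<^sub>0 \<union> C r\<^sub>1) = card (C r\<^sub>0) + card (C r\<^sub>1)"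
    by (rule card_Un_disjoint) (use fin r(3) in \<open>auto simp: C_def\<close>)
  finally have card_S: "card S = card (C r\<^sub>0) + card (C r\<^sub>1) + card (C r\<^sub>2)"
    using \<open>S = _\<close> by simp
  have class_le: "real (card (C r)) \<le> real n / 36 + 1" for r
    unfolding C_def using card_top_residue_class_le[OF S_window \<open>finite S\<close>] .
  have pair_le: "card (C r) + card (C r') \<le> card (sum_sixths n S) + 1"
    if r_r': "(r + r') mod 12 = 6" and nonempty: "C r \<noteq> {}" "C r' \<noteq> {}" for r r'
  proof (rule card_pair_le_sum_sixths[OF S_window \<open>finite S\<close> _ _ nonempty])
    show "C r \<subseteq> S" "C r' \<subseteq> S" unfolding C_def by auto
    show "\<forall>x\<in>C r. \<forall>y\<in>C r'. (x + y) mod 12 = 6"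
    proof (intro ballI)
      fix x y assume "x \<in> C r" "y \<in> C r'"
      then have "x mod 12 = r" "y mod 12 = r'" unfolding C_def by simp_all
      then have "(x + y) mod 12 = (r + r') mod 12" by (metis mod_add_eq)
      with r_r' show "(x + y) mod 12 = 6" by simp
    qed
  qed
  have r\<^sub>0_le: "card (C r\<^sub>0) \<le> card (sum_sixths n S) + 1"
  proof (cases "C r\<^sub>0 = {}")
    case False
    then show ?thesis using pair_le[OF r(1) False False] by linarith
  qed simp
  show ?thesis
  proof (cases "C r\<^sub>1 = {} \<or> C r\<^sub>2 = {}")
    case True
    then have "real (card (C r\<^sub>1) + card (C r\<^sub>2)) \<le> real n / 36 + 1"
      using class_le by auto
    moreover have "real (card (C r\<^sub>0)) \<le> real (card (sum_sixths n S) + 1)"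
      using r\<^sub>0_le by (rule of_nat_mono)
    ultimately show ?thesis using card_S by simp
  next
    case False
    then have "real (card (C r\<^sub>1) + card (C r\<^sub>2)) \<le> real (card (sum_sixths n S) + 1)"
      using pair_le[OF r(2)] by (intro of_nat_mono) simp
    then show ?thesis using class_le[of r\<^sub>0] card_S by simp
  qed
qed

theorem mainTheorem15:
  fixes n i :: nat and A :: "nat set"
  assumes "A \<subseteq> {1..n}" and "propP A" and "i \<in> {1, 3}"
  shows "real (card (Z12 n A)) + real (card {x \<in> A. 2 * n < 3 * x \<and> x \<le> n \<and> x mod 4 = i})
           \<le> real n / 12 + 3"
proof -
  define S where "S = {x \<in> A. 2 * n < 3 * x \<and> x \<le> n \<and> x mod 4 = i}"
  have S: "\<forall>x\<in>S. 2 * n < 3 * x \<and> x \<le> n \<and> x mod 4 = i" and "S \<subseteq> A"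
    unfolding S_def by blast+
  have "Z12 n A \<inter> sum_sixths n S = {}"
    using Z12_disjoint_sum_sixths[OF assms(2) \<open>S \<subseteq> A\<close>] S by blast
  moreover have "Z12 n A \<subseteq> odd_window n" "sum_sixths n S \<subseteq> odd_window n"
    using Z12_subset_odd_window unfolding sum_sixths_def by blast+
  ultimately have "card (Z12 n A) + card (sum_sixths n S) \<le> card (odd_window n)"
    using finite_odd_window
    by (metis card_Un_disjoint card_mono Un_least rev_finite_subset)
  moreover have "real (card S) \<le> real (card (sum_sixths n S)) + real n / 36 + 2"
    using card_top_le_sum_sixths[OF S assms(3)] .
  ultimately show ?thesis
    using card_odd_window_le[of n] unfolding S_def by linarith
qed

end
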